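(* Let $m\ge n$, $B\in\mathbb R^{n\times m}$ of full row rank, $f:\mathbb R^m\to\mathbb R$, $h:\mathbb R^n\to\mathbb R$ convex and continuously differentiable with Lipschitz gradients, $\mathcal L(u,p)=f(u)-h(p)+(Bu,p)$, and let $(u^*,p^* )$ be the saddle point of $\mathcal L$. Let $\mathcal I_{\mathcal V}$ ($m\times m$) and $\mathcal I_{\mathcal Q}$ ($n\times n$) be symmetric positive definite. Assume $f\in\mathcal S^{1,1}_{\mu_{f,\mathcal I_{\mathcal V}},L_{f,\mathcal I_{\mathcal V}}}$ with respect to $\mathcal I_{\mathcal V}$ with $0<\mu_{f,\mathcal I_{\mathcal V}}\le L_{f,\mathcal I_{\mathcal V}}<2$. Define the Lyapunov function $\mathcal E(u,p)=\frac12\|u-u^*\|^2_{\mathcal I_{\mathcal V}}+\frac12\|p-p^*\|^2_{\mathcal I_{\mathcal Q}}$ and the transformed primal-dual (TPD) vector field $\mathcal G=(\mathcal G^u,\mathcal G^p)$, $$\mathcal G^u(u,p)=-\mathcal I_{\mathcal V}^{-1}(\nabla f(u)+B^\top p),\qquad \mathcal G^p(u,p)=-\mathcal I_{\mathcal Q}^{-1}\big(\nabla h_B(p)-Be(u)\big).$$ Then for all $(u,p)$, $$-\nabla\mathcal E(u,p)\cdot\mathcal G(u,p)\ \ge\ \mu\,\mathcal E(u,p)+\frac{\mu_{f,\mathcal I_{\mathcal V}}}{2}\|v-v^*\|^2_{\mathcal I_{\mathcal V}},$$ where $\mu=\min\{\mu_{\mathcal V},\mu_{\mathcal Q}\}>0$,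 $v=u+\mathcal I_{\mathcal V}^{-1}B^\top p$, $v^*=u^*+\mathcal I_{\mathcal V}^{-1}B^\top p^*$. Consequently, if $(u(t),p(t))$ solves $u'=\mathcal G^u(u,p)$, $p'=\mathcal G^p(u,p)$, then $\mathcal E(u(t),p(t))\le e^{-\mu t}\mathcal E(u(0),p(0))$ for all $t>0$.
   Context: $(\cdot,\cdot)$ is the Euclidean inner product; for SPD $M$, $\|x\|_M=(Mx,x)^{1/2}$. A saddle point satisfies $\nabla f(u^* )+B^\top p^*=0$, $Bu^*=\nabla h(p^* )$. Bregman divergence: $D_g(y,x)=g(y)-g(x)-(\nabla g(x),y-x)$; $g\in\mathcal S^{1,1}_{\mu_{g,M},L_{g,M}}$ with respect to SPD $M$ means $\frac{\mu_{g,M}}{2}\|x-y\|_M^2\le D_g(y,x)\le\frac{L_{g,M}}{2}\|x-y\|_M^2$ for all $x,y$. Here $e(u)=u-\mathcal I_{\mathcal V}^{-1}\nabla f(u)$ and $h_B(p)=h(p)+\frac12(B\mathcal I_{\mathcal V}^{-1}B^\top p,p)$; $\mu_{h_B,\mathcal I_{\mathcal Q}}>0$ denotes the strong convexity constant of $h_B$ with respect to $\mathcal I_{\mathcal Q}$. Constants: $\mu_{\mathcal V}=\mu_{f,\mathcal I_{\mathcal V}}$ and $\mu_{\mathcal Q}=(2-L_{f,\mathcal I_{\mathcal V}})\mu_{h_B,\mathcal I_{\mathcal Q}}$. The expression $\nabla\mathcal E(u,p)\cdot\mathcal G(u,p)$ means $(\mathcal I_{\mathcal V}(u-u^* ),\mathcal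 G^u(u,p))+(\mathcal I_{\mathcal Q}(p-p^* ),\mathcal G^p(u,p))$. *)

theory Defs
  imports "HOL-Analysis.Analysis"
begin

definition Mnorm :: "real^'n^'n \<Rightarrow> real^'n \<Rightarrow> real" where
  "Mnorm M x = sqrt (x \<bullet> (M *v x))"

definition spd :: "real^'n^'n \<Rightarrow> bool" where
  "spd M \<longleftrightarrow> transpose M = M \<and> (\<forall>x. x \<noteq> 0 \<longrightarrow> 0 < x \<bullet> (M *v x))"

definition bregman :: "('a::real_inner \<Rightarrow> real) \<Rightarrow> ('a \<Rightarrow> 'a) \<Rightarrow> 'a \<Rightarrow> 'a \<Rightarrow> real" where
  "bregman g dg y x = g y - g x - dg x \<bullet> (y - x)"

definition S11 :: "(real^'n \<Rightarrow> real) \<Rightarrow> (real^'n \<Rightarrow> real^'n) \<Rightarrow> real \<Rightarrow> real \<Rightarrow> real^'n^'n \<Rightarrow> bool" where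
  "S11 g dg mu L M \<longleftrightarrow>
     (\<forall>x y. mu / 2 * (Mnorm M (x - y))\<^sup>2 \<le> bregman g dg y x
          \<and> bregman g dg y x \<le> L / 2 * (Mnorm M (x - y))\<^sup>2)"

definition strongly_convex_wrt :: "(real^'n \<Rightarrow> real) \<Rightarrow> (real^'n \<Rightarrow> real^'n) \<Rightarrow> real \<Rightarrow> real^'n^'n \<Rightarrow> bool" where
  "strongly_convex_wrt g dg mu M \<longleftrightarrow>
     (\<forall>x y. mu / 2 * (Mnorm M (x - y))\<^sup>2 \<le> bregman g dg y x)"

definition lipschitz_map :: "('a::real_normed_vector \<Rightarrow> 'b::real_normed_vector) \<Rightarrow> bool" where
  "lipschitz_map F \<longleftrightarrow> (\<exists>K. \<forall>x y. norm (F x - F y) \<le> K * norm (x - y))"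

end

theory Submission
  imports Defs
begin

text \<open>
Put
w = IV^-1 B^T (p - p*). The saddle-point equations turn -\<nabla>E\<cdot>G into
(v - v*)\<cdot>(\<nabla>f(u) - \<nabla>f(u*)) + (\<nabla>hB(p) - \<nabla>hB(p*))\<cdot>(p - p*).
The three-point identity for Bregman divergences, taken at u, u* and u* - w,
bounds the first term from below by
muf/2 (||v - v*||^2 + ||u - u*||^2) - Lf/2 ||w||^2.
The second term dominates muhB ||p - p*||^2 by strong convexity of hB, and
||w||^2 by monotonicity of \<nabla>h; splitting it with weights 1 - Lf/2 and Lf/2
absorbs the negative term. Exponential decay then follows because
exp(mu t) E is nonincreasing.
\<close>

lemma inner_matrix_vector_mult_transpose:
  fixes A :: "real^'n^'m"
  shows "(A *v x) \<bullet> y = x \<bullet> (transpose A *v y)"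
  by (metis dot_lmul_matrix inner_commute transpose_matrix_vector)

declare transpose_matrix_vector [simp del]
  \<comment> \<open>otherwise simp turns \<open>transpose A *v x\<close> into \<open>x v* A\<close>\<close>

lemma invertible_matrix_inv:
  fixes M :: "'a::field^'n^'n"
  assumes "invertible M"
  shows "M ** matrix_inv M = mat 1" and "matrix_inv M ** M = mat 1"
proof -
  have "\<exists>M'. M ** M' = mat 1 \<and> M' ** M = mat 1"
    using assms unfolding invertible_def .
  then have "M ** matrix_inv M = mat 1 \<and> matrix_inv M ** M = mat 1"
    unfolding matrix_inv_def by (rule someI_ex)
  then show "M ** matrix_inv M = mat 1" and "matrix_inv M ** M = mat 1" by auto
qed

lemma matrix_vector_mul_matrix_inv:
  fixes M :: "'a::field^'n^'n"
  assumes "invertible M"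
  shows "M *v (matrix_inv M *v y) = y"
  using invertible_matrix_inv[OF assms] by (simp add: matrix_vector_mul_assoc)

lemma spd_invertible:
  fixes M :: "real^'n^'n"
  assumes "spd M"
  shows "invertible M"
proof -
  have "M *v x = 0 \<Longrightarrow> x = 0" for x
    using assms unfolding spd_def by (metis inner_zero_right order_less_irrefl)
  then show ?thesis
    using invertible_left_inverse matrix_left_invertible_ker by blast
qed

lemma spd_inner_commute:
  fixes M :: "real^'n^'n"
  assumes "spd M"
  shows "x \<bullet> (M *v y) = (M *v x) \<bullet> y"
  using inner_matrix_vector_mult_transpose[of M x y] assms unfolding spd_def by simp

lemma spd_inner_matrix_inv:
  fixes M :: "real^'n^'n"
  assumes "spd M"
  shows "(M *v x) \<bullet> (matrix_inv M *v y) = x \<bullet> y"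
  using spd_inner_commute[OF assms, of x "matrix_inv M *v y"]
  by (simp add: matrix_vector_mul_matrix_inv[OF spd_invertible[OF assms]])

lemma Mnorm_squared:
  fixes M :: "real^'n^'n"
  assumes "spd M"
  shows "(Mnorm M x)\<^sup>2 = x \<bullet> (M *v x)"
proof -
  have "0 \<le> x \<bullet> (M *v x)"
    using assms unfolding spd_def by (cases "x = 0") (auto intro: less_imp_le)
  then show ?thesis unfolding Mnorm_def by simp
qed

lemma Mnorm_minus_commute: "Mnorm M (x - y) = Mnorm M (y - x)"
  unfolding Mnorm_def
  by (metis (no_types) inner_minus_left matrix_vector_mult_diff_distrib minus_diff_eq
      minus_diff_minus inner_minus_right)

lemma bregman_three_point:
  "bregman g dg z u + bregman g dg u x - bregman g dg z x = (dg u - dg x) \<bullet> (u - z)"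
  unfolding bregman_def by (simp add: inner_diff_left inner_diff_right)

lemma bregman_symmetrized:
  "bregman g dg x y + bregman g dg y x = (dg x - dg y) \<bullet> (x - y)"
  unfolding bregman_def by (simp add: inner_diff_left inner_diff_right inner_commute)

lemma convex_on_imp_bregman_nonneg:
  fixes g :: "'a::real_inner \<Rightarrow> real"
  assumes convex: "convex_on UNIV g" and grad: "\<And>x. GDERIV g x :> dg x"
  shows "0 \<le> bregman g dg y x"
proof -
  define \<phi> where "\<phi> t = g (x + t *\<^sub>R (y - x))" for t :: real
  have "convex_on UNIV \<phi>"
  proof (rule convex_onI)
    fix t a b :: real
    assume "0 < t" "t < 1"
    have line_comb: "x + ((1 - t) *\<^sub>R a + t *\<^sub>R b) *\<^sub>R (y - x)
        = (1 - t) *\<^sub>R (x + a *\<^sub>R (y - x)) + t *\<^sub>R (x + b *\<^sub>R (y - x))"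
      by (simp add: algebra_simps)
    show "\<phi> ((1 - t) *\<^sub>R a + t *\<^sub>R b) \<le> (1 - t) * \<phi> a + t * \<phi> b"
      unfolding \<phi>_def line_comb using \<open>0 < t\<close> \<open>t < 1\<close> by (intro convex_onD[OF convex]) auto
  qed auto
  moreover have "(\<phi> has_field_derivative dg x \<bullet> (y - x)) (at 0 within UNIV)"
  proof -
    have line: "((\<lambda>t. x + t *\<^sub>R (y - x)) has_derivative (\<lambda>t. t *\<^sub>R (y - x))) (at 0)"
      by (auto intro!: derivative_eq_intros)
    have "(g has_derivative (\<lambda>k. k \<bullet> dg x)) (at (x + 0 *\<^sub>R (y - x)))"
      using grad[of x] unfolding gderiv_def by simp
    from has_derivative_compose[OF line this]
    have "(\<phi> has_derivative (\<lambda>t. (t *\<^sub>R (y - x)) \<bullet> dg x)) (at 0)"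
      unfolding \<phi>_def o_def .
    then show ?thesis unfolding has_field_derivative_def
      by (rule has_derivative_eq_rhs) (auto simp: inner_commute)
  qed
  ultimately have "\<phi> 1 - \<phi> 0 \<ge> dg x \<bullet> (y - x) * (1 - 0)"
    by (intro convex_on_imp_above_tangent[where A = UNIV]) auto
  then show ?thesis unfolding \<phi>_def bregman_def by simp
qed

lemma convex_on_imp_gderiv_monotone:
  fixes g :: "'a::real_inner \<Rightarrow> real"
  assumes "convex_on UNIV g" and "\<And>x. GDERIV g x :> dg x"
  shows "0 \<le> (dg x - dg y) \<bullet> (x - y)"
  using convex_on_imp_bregman_nonneg[OF assms, of x y]
    convex_on_imp_bregman_nonneg[OF assms, of y x] bregman_symmetrized[of g dg x y]
  by linarith

lemma strongly_convex_wrt_imp_strongly_monotone: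
  assumes "strongly_convex_wrt g dg mu M"
  shows "mu * (Mnorm M (x - y))\<^sup>2 \<le> (dg x - dg y) \<bullet> (x - y)"
proof -
  have "mu / 2 * (Mnorm M (x - y))\<^sup>2 \<le> bregman g dg y x"
    and "mu / 2 * (Mnorm M (y - x))\<^sup>2 \<le> bregman g dg x y"
    using assms unfolding strongly_convex_wrt_def by blast+
  then show ?thesis
    unfolding Mnorm_minus_commute[of M y x] using bregman_symmetrized[of g dg x y] by linarith
qed

lemma S11_three_point_bound:
  assumes "S11 g dg mu L M"
  shows "mu / 2 * (Mnorm M (u - z))\<^sup>2 + mu / 2 * (Mnorm M (u - x))\<^sup>2 - L / 2 * (Mnorm M (x - z))\<^sup>2
    \<le> (dg u - dg x) \<bullet> (u - z)"
proof -
  have "mu / 2 * (Mnorm M (u - z))\<^sup>2 \<le> bregman g dg z u"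
    and "mu / 2 * (Mnorm M (x - u))\<^sup>2 \<le> bregman g dg u x"
    and "bregman g dg z x \<le> L / 2 * (Mnorm M (x - z))\<^sup>2"
    using assms unfolding S11_def by blast+
  then show ?thesis
    unfolding Mnorm_minus_commute[of M x u] using bregman_three_point[of g dg z u x] by linarith
qed

lemma Mnorm_squared_has_real_derivative:
  fixes M :: "real^'n^'n"
  assumes "spd M" and "(x has_vector_derivative X) (at t within S)"
  shows "((\<lambda>t. (Mnorm M (x t - c))\<^sup>2) has_real_derivative 2 * ((M *v (x t - c)) \<bullet> X)) (at t within S)"
proof -
  have "((\<lambda>t. (x t - c) \<bullet> (M *v (x t - c))) has_derivative
     (\<lambda>k. (x t - c) \<bullet> (M *v (k *\<^sub>R X - 0)) + (k *\<^sub>R X - 0) \<bullet> (M *v (x t - c)))) (at t within S)"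
    using assms(2) unfolding has_vector_derivative_def
    by (intro has_derivative_inner has_derivative_diff has_derivative_const
        bounded_linear.has_derivative[OF matrix_vector_mul_bounded_linear])
  then have "((\<lambda>t. (x t - c) \<bullet> (M *v (x t - c))) has_real_derivative 2 * ((M *v (x t - c)) \<bullet> X))
      (at t within S)"
    unfolding has_field_derivative_def
    by (rule has_derivative_eq_rhs)
      (simp add: fun_eq_iff matrix_vector_mult_scaleR spd_inner_commute[OF assms(1), of "x t - c"]
        inner_commute[of X])
  then show ?thesis by (simp add: Mnorm_squared[OF assms(1)])
qed

lemma deriv_le_linear_imp_exp_decay:
  fixes e e' :: "real \<Rightarrow> real"
  assumes deriv: "\<And>\<tau>. 0 \<le> \<tau> \<Longrightarrow> (e has_real_derivative e' \<tau>) (at \<tau> within {0..})"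
    and bound: "\<And>\<tau>. 0 \<le> \<tau> \<Longrightarrow> e' \<tau> \<le> - mu * e \<tau>"
    and "0 \<le> t"
  shows "e t \<le> exp (- mu * t) * e 0"
proof -
  define \<phi> where "\<phi> \<tau> = exp (mu * \<tau>) * e \<tau>" for \<tau>
  have \<phi>_deriv: "(\<phi> has_real_derivative exp (mu * \<tau>) * (e' \<tau> + mu * e \<tau>)) (at \<tau> within {0..})"
    if "0 \<le> \<tau>" for \<tau>
    unfolding \<phi>_def by (rule derivative_eq_intros deriv[OF that] refl | simp add: algebra_simps)+
  have "\<phi> t \<le> \<phi> 0"
  proof (rule DERIV_nonpos_imp_decreasing_open[OF \<open>0 \<le> t\<close>])
    fix \<tau> :: real assume "0 < \<tau>"
    then have "at \<tau> within {0..} = at \<tau>"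
      by (intro at_within_interior) simp
    moreover have "exp (mu * \<tau>) * (e' \<tau> + mu * e \<tau>) \<le> 0"
      using bound[of \<tau>] \<open>0 < \<tau>\<close> by (simp add: mult_nonneg_nonpos)
    ultimately show "\<exists>y. (\<phi> has_real_derivative y) (at \<tau>) \<and> y \<le> 0"
      using \<phi>_deriv[of \<tau>] \<open>0 < \<tau>\<close> by auto
  next
    show "continuous_on {0..t} \<phi>"
    proof (rule continuous_on_subset)
      show "continuous_on {0..} \<phi>"
        by (rule DERIV_continuous_on) (use \<phi>_deriv in auto)
    qed auto
  qed
  then show ?thesis
    unfolding \<phi>_def by (simp add: exp_minus field_simps)
qed

locale tpd_saddle =
  fixes B :: "real^'m^'n" and gf :: "real^'m \<Rightarrow> real^'m" and gh :: "real^'n \<Rightarrow> real^'n"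
    and IV :: "real^'m^'m" and IQ :: "real^'n^'n" and ustar :: "real^'m" and pstar :: "real^'n"
  assumes IV_spd: "spd IV" and IQ_spd: "spd IQ"
    and saddle_u: "gf ustar + transpose B *v pstar = 0"
    and saddle_p: "B *v ustar = gh pstar"
begin

definition e :: "real^'m \<Rightarrow> real^'m" where
  "e u = u - matrix_inv IV *v gf u"

definition ghB :: "real^'n \<Rightarrow> real^'n" where
  "ghB p = gh p + (B ** matrix_inv IV ** transpose B) *v p"

definition Gu :: "real^'m \<Rightarrow> real^'n \<Rightarrow> real^'m" where
  "Gu u p = - (matrix_inv IV *v (gf u + transpose B *v p))"

definition Gp :: "real^'m \<Rightarrow> real^'n \<Rightarrow> real^'n" where
  "Gp u p = - (matrix_inv IQ *v (ghB p - B *v e u))"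

definition E :: "real^'m \<Rightarrow> real^'n \<Rightarrow> real" where
  "E u p = 1/2 * (Mnorm IV (u - ustar))\<^sup>2 + 1/2 * (Mnorm IQ (p - pstar))\<^sup>2"

definition v :: "real^'m \<Rightarrow> real^'n \<Rightarrow> real^'m" where
  "v u p = u + matrix_inv IV *v (transpose B *v p)"

lemma transpose_B_pstar: "transpose B *v pstar = - gf ustar"
  using saddle_u by (simp add: eq_neg_iff_add_eq_0 add.commute)

lemma ghB_pstar: "ghB pstar = B *v e ustar"
  unfolding ghB_def e_def
  by (simp add: matrix_vector_mul_assoc[symmetric] transpose_B_pstar saddle_p
      matrix_vector_mult_diff_distrib linear_neg[OF matrix_vector_mul_linear])

lemma v_diff: "v u p - v ustar pstar = (u - ustar) + matrix_inv IV *v (transpose B *v (p - pstar))"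
  unfolding v_def by (simp add: matrix_vector_mult_diff_distrib)

lemma ghB_diff_inner:
  "(ghB p - ghB q) \<bullet> (p - q)
     = (gh p - gh q) \<bullet> (p - q) + (Mnorm IV (matrix_inv IV *v (transpose B *v (p - q))))\<^sup>2"
proof -
  define w where "w = matrix_inv IV *v (transpose B *v (p - q))"
  have "ghB p - ghB q = (gh p - gh q) + B *v w"
    unfolding ghB_def w_def
    by (simp add: matrix_vector_mul_assoc[symmetric] matrix_vector_mult_diff_distrib)
  moreover have "(B *v w) \<bullet> (p - q) = (Mnorm IV w)\<^sup>2"
    unfolding inner_matrix_vector_mult_transpose Mnorm_squared[OF IV_spd] w_def
    by (simp add: matrix_vector_mul_matrix_inv[OF spd_invertible[OF IV_spd]])
  ultimately show ?thesis unfolding w_def by (simp add: inner_add_left)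
qed

lemma neg_pairing_eq:
  "- ((IV *v (u - ustar)) \<bullet> Gu u p + (IQ *v (p - pstar)) \<bullet> Gp u p)
     = (v u p - v ustar pstar) \<bullet> (gf u - gf ustar) + (ghB p - ghB pstar) \<bullet> (p - pstar)"
proof -
  define r where "r = transpose B *v (p - pstar)"
  define w where "w = matrix_inv IV *v r"
  have IV_w: "IV *v w = r"
    unfolding w_def by (rule matrix_vector_mul_matrix_inv[OF spd_invertible[OF IV_spd]])
  have "Gu u p = - (matrix_inv IV *v ((gf u - gf ustar) + r))"
    unfolding Gu_def r_def by (simp add: matrix_vector_mult_diff_distrib transpose_B_pstar)
  then have u_part:
    "- ((IV *v (u - ustar)) \<bullet> Gu u p) = (u - ustar) \<bullet> (gf u - gf ustar) + (u - ustar) \<bullet> r"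
    by (simp add: spd_inner_matrix_inv[OF IV_spd] inner_add_right)
  define y where "y = (u - ustar) - matrix_inv IV *v (gf u - gf ustar)"
  have "Gp u p = - (matrix_inv IQ *v ((ghB p - ghB pstar) - B *v y))"
    unfolding Gp_def ghB_pstar e_def y_def by (simp add: matrix_vector_mult_diff_distrib algebra_simps)
  then have "- ((IQ *v (p - pstar)) \<bullet> Gp u p) = (p - pstar) \<bullet> ((ghB p - ghB pstar) - B *v y)"
    by (simp add: spd_inner_matrix_inv[OF IQ_spd])
  also have "\<dots> = ((ghB p - ghB pstar) - B *v y) \<bullet> (p - pstar)"
    by (rule inner_commute)
  also have "\<dots> = (ghB p - ghB pstar) \<bullet> (p - pstar) - y \<bullet> r"
    unfolding inner_diff_left[of "ghB p - ghB pstar"] inner_matrix_vector_mult_transpose r_def ..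
  also have "y \<bullet> r = (u - ustar) \<bullet> r - (matrix_inv IV *v (gf u - gf ustar)) \<bullet> r"
    unfolding y_def by (rule inner_diff_left)
  also have "(matrix_inv IV *v (gf u - gf ustar)) \<bullet> r = w \<bullet> (gf u - gf ustar)"
    unfolding IV_w[symmetric] by (simp add: inner_commute spd_inner_matrix_inv[OF IV_spd])
  finally have p_part: "- ((IQ *v (p - pstar)) \<bullet> Gp u p)
      = (ghB p - ghB pstar) \<bullet> (p - pstar) - (u - ustar) \<bullet> r + w \<bullet> (gf u - gf ustar)"
    by simp
  show ?thesis
    using u_part p_part unfolding v_diff r_def[symmetric] w_def[symmetric]
    by (simp add: inner_add_left)
qed

lemma E_has_real_derivative:
  assumes "(uu has_vector_derivative X) (at t within S)"
    and "(pp has_vector_derivative Y) (at t within S)"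
  shows "((\<lambda>t. E (uu t) (pp t)) has_real_derivative
            (IV *v (uu t - ustar)) \<bullet> X + (IQ *v (pp t - pstar)) \<bullet> Y) (at t within S)"
  using DERIV_add[OF DERIV_cmult[OF Mnorm_squared_has_real_derivative[OF IV_spd assms(1)]]
      DERIV_cmult[OF Mnorm_squared_has_real_derivative[OF IQ_spd assms(2)]],
      of "1/2" ustar "1/2" pstar]
  unfolding E_def by simp

end

locale tpd_convex = tpd_saddle B gf gh IV IQ ustar pstar
  for B :: "real^'m^'n" and gf :: "real^'m \<Rightarrow> real^'m" and gh :: "real^'n \<Rightarrow> real^'n"
    and IV :: "real^'m^'m" and IQ :: "real^'n^'n" and ustar :: "real^'m" and pstar :: "real^'n" +
  fixes f :: "real^'m \<Rightarrow> real" and h :: "real^'n \<Rightarrow> real" and muf Lf muhB :: real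
  assumes f_S11: "S11 f gf muf Lf IV"
    and h_convex: "convex_on UNIV h" and h_grad: "\<And>p. GDERIV h p :> gh p"
    and hB_sc: "strongly_convex_wrt
                  (\<lambda>p. h p + 1/2 * (((B ** matrix_inv IV ** transpose B) *v p) \<bullet> p))
                  (\<lambda>p. gh p + (B ** matrix_inv IV ** transpose B) *v p) muhB IQ"
    and muf_pos: "0 < muf" and muf_le_Lf: "muf \<le> Lf" and Lf_lt2: "Lf < 2" and muhB_pos: "0 < muhB"
begin

definition mu :: real where
  "mu = min muf ((2 - Lf) * muhB)"

lemma mu_pos: "0 < mu"
  unfolding mu_def using muf_pos Lf_lt2 muhB_pos by simp

lemma neg_pairing_lower_bound:
  "mu * E u p + muf / 2 * (Mnorm IV (v u p - v ustar pstar))\<^sup>2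
     \<le> - ((IV *v (u - ustar)) \<bullet> Gu u p + (IQ *v (p - pstar)) \<bullet> Gp u p)"
proof -
  define w where "w = matrix_inv IV *v (transpose B *v (p - pstar))"
  define S where "S = (Mnorm IV (v u p - v ustar pstar))\<^sup>2"
  define U where "U = (Mnorm IV (u - ustar))\<^sup>2"
  define P where "P = (Mnorm IQ (p - pstar))\<^sup>2"
  define Z where "Z = (Mnorm IV w)\<^sup>2"
  define X where "X = (ghB p - ghB pstar) \<bullet> (p - pstar)"
  have "u - (ustar - w) = v u p - v ustar pstar"
    unfolding v_diff w_def by simp
  then have f_part:
    "muf / 2 * S + muf / 2 * U - Lf / 2 * Z \<le> (v u p - v ustar pstar) \<bullet> (gf u - gf ustar)"
    using S11_three_point_bound[OF f_S11, of u "ustar - w" ustar]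
    unfolding S_def U_def Z_def by (simp add: inner_commute)
  have "muhB * P \<le> X"
    using strongly_convex_wrt_imp_strongly_monotone[OF hB_sc] unfolding P_def X_def ghB_def .
  then have "(2 - Lf) * (muhB * P) \<le> (2 - Lf) * X"
    using Lf_lt2 by (intro mult_left_mono) auto
  moreover have "Lf * Z \<le> Lf * X"
    using muf_pos muf_le_Lf ghB_diff_inner[of p pstar]
      convex_on_imp_gderiv_monotone[OF h_convex h_grad]
    unfolding X_def Z_def w_def by (intro mult_left_mono) (auto simp: add_increasing)
  moreover have "mu * U \<le> muf * U" and "mu * P \<le> (2 - Lf) * muhB * P"
    unfolding mu_def U_def P_def by (auto intro: mult_right_mono)
  ultimately have "mu * E u p + muf / 2 * S \<le> (v u p - v ustar pstar) \<bullet> (gf u - gf ustar) + X"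
    using f_part unfolding E_def U_def[symmetric] P_def[symmetric] by (simp add: algebra_simps)
  then show ?thesis
    unfolding neg_pairing_eq X_def S_def .
qed

lemma E_exp_decay:
  assumes "\<And>t. 0 \<le> t \<Longrightarrow> (uu has_vector_derivative Gu (uu t) (pp t)) (at t within {0..})"
    and "\<And>t. 0 \<le> t \<Longrightarrow> (pp has_vector_derivative Gp (uu t) (pp t)) (at t within {0..})"
    and "0 \<le> t"
  shows "E (uu t) (pp t) \<le> exp (- mu * t) * E (uu 0) (pp 0)"
proof (rule deriv_le_linear_imp_exp_decay[where e = "\<lambda>t. E (uu t) (pp t)"])
  fix \<tau> :: real
  assume "0 \<le> \<tau>"
  show "((\<lambda>t. E (uu t) (pp t)) has_real_derivative
      (IV *v (uu \<tau> - ustar)) \<bullet> Gu (uu \<tau>) (pp \<tau>) + (IQ *v (pp \<tau> - pstar)) \<bullet> Gp (uu \<tau>) (pp \<tau>))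
      (at \<tau> within {0..})"
    using assms(1,2) \<open>0 \<le> \<tau>\<close> by (intro E_has_real_derivative)
  show "(IV *v (uu \<tau> - ustar)) \<bullet> Gu (uu \<tau>) (pp \<tau>) + (IQ *v (pp \<tau> - pstar)) \<bullet> Gp (uu \<tau>) (pp \<tau>)
      \<le> - mu * E (uu \<tau>) (pp \<tau>)"
  proof -
    have "0 \<le> muf / 2 * (Mnorm IV (v (uu \<tau>) (pp \<tau>) - v ustar pstar))\<^sup>2"
      using muf_pos by simp
    then show ?thesis
      using neg_pairing_lower_bound[of "uu \<tau>" "pp \<tau>"] by linarith
  qed
qed (fact \<open>0 \<le> t\<close>)

end

theorem theorem3p2:
  fixes B :: "real^'m^'n"
    and f :: "real^'m \<Rightarrow> real" and gf :: "real^'m \<Rightarrow> real^'m"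
    and h :: "real^'n \<Rightarrow> real" and gh :: "real^'n \<Rightarrow> real^'n"
    and IV :: "real^'m^'m" and IQ :: "real^'n^'n"
    and ustar :: "real^'m" and pstar :: "real^'n"
    and muf Lf muhB :: real
  assumes dims: "CARD('n) \<le> CARD('m)"
    and fullrank: "rank B = CARD('n)"
    and f_grad: "\<And>u. GDERIV f u :> gf u"
    and h_grad: "\<And>p. GDERIV h p :> gh p"
    and f_convex: "convex_on UNIV f" and h_convex: "convex_on UNIV h"
    and gf_cont: "continuous_on UNIV gf" and gh_cont: "continuous_on UNIV gh"
    and gf_lip: "lipschitz_map gf" and gh_lip: "lipschitz_map gh"
    and saddle1: "gf ustar + transpose B *v pstar = 0"
    and saddle2: "B *v ustar = gh pstar"
    and IV_spd: "spd IV" and IQ_spd: "spd IQ"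
    and f_S11: "S11 f gf muf Lf IV"
    and muf_pos: "0 < muf" and muf_le_Lf: "muf \<le> Lf" and Lf_lt2: "Lf < 2"
    and hB_sc: "strongly_convex_wrt
                  (\<lambda>p. h p + 1/2 * (((B ** matrix_inv IV ** transpose B) *v p) \<bullet> p))
                  (\<lambda>p. gh p + (B ** matrix_inv IV ** transpose B) *v p) muhB IQ"
    and muhB_pos: "0 < muhB"
  shows "let e = (\<lambda>u. u - matrix_inv IV *v gf u);
             ghB = (\<lambda>p. gh p + (B ** matrix_inv IV ** transpose B) *v p);
             Gu = (\<lambda>u p. - (matrix_inv IV *v (gf u + transpose B *v p)));
             Gp = (\<lambda>u p. - (matrix_inv IQ *v (ghB p - B *v e u)));
             E = (\<lambda>u p. 1/2 * (Mnorm IV (u - ustar))\<^sup>2 + 1/2 * (Mnorm IQ (p - pstar))\<^sup>2);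
             muV = muf;
             muQ = (2 - Lf) * muhB;
             mu = min muV muQ;
             vstar = ustar + matrix_inv IV *v (transpose B *v pstar)
         in 0 < mu
          \<and> (\<forall>u p. - ((IV *v (u - ustar)) \<bullet> Gu u p + (IQ *v (p - pstar)) \<bullet> Gp u p)
                     \<ge> mu * E u p
                       + muf / 2 * (Mnorm IV ((u + matrix_inv IV *v (transpose B *v p)) - vstar))\<^sup>2)
          \<and> (\<forall>(uu :: real \<Rightarrow> real^'m) (pp :: real \<Rightarrow> real^'n).
               (\<forall>t\<ge>0. (uu has_vector_derivative Gu (uu t) (pp t)) (at t within {0..})
                     \<and> (pp has_vector_derivative Gp (uu t) (pp t)) (at t within {0..}))
               \<longrightarrow> (\<forall>t>0. E (uu t) (pp t) \<le> exp (- mu * t) * E (uu 0) (pp 0)))"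
proof -
  \<comment> \<open>The dimension, rank and regularity hypotheses not passed to the locale only
    ensure that the saddle point and the flow exist.\<close>
  interpret tpd_convex B gf gh IV IQ ustar pstar f h muf Lf muhB
    by unfold_locales (fact assms)+
  show ?thesis
    unfolding Let_def e_def[symmetric] ghB_def[symmetric] Gp_def[symmetric] Gu_def[symmetric]
      E_def[symmetric] mu_def[symmetric] v_def[symmetric]
    using mu_pos neg_pairing_lower_bound E_exp_decay by (auto simp: less_imp_le)
qed

end
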